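(* Let $K^{(d)}$ be a sequence of positive semi-definite dot-product kernels on $\mathbb S^{d-1}$ (data uniform on $\mathbb S^{d-1}$), with distinct eigenvalues $\tilde\lambda_1>\tilde\lambda_2>\dots$ and multiplicities $N(d,1),N(d,2),\dots$, and suppose there is $b>0$ such that for all $d$ (with $m=m(d)$), $\max_{i\le k_m}\frac1{\tilde\lambda_i}<\frac{m-L_m}{b}$. Let the dimension grow with sample size as $d=\log_2 m$ (i.e. $m=2^d$), and let the noise variance be $\sigma^2>0$. Then the minimum-norm interpolant cannot exhibit benign overfitting for any such sequence: there is an absolute constant $\eta>0$ such that for all $d,m$, $\tilde R(\hat f_0)>(1+\eta)\sigma^2$.
   Context: Eigenframework: with Mercer eigenvalues $\lambda_1\ge\lambda_2\ge\dots>0$ (with multiplicity) and target $f^*=\sum_i\beta_i\phi_i$, let $\kappa_0>0$ solve $\sum_i\frac{\lambda_i}{\lambda_i+\kappa_0}=m$, $\mathcal L_i=\frac{\lambda_i}{\lambda_i+\kappa_0}$, $\mathcal E_0=\frac{m}{m-\sum_i\mathcal L_i^2}$; the predicted risk of the minimum-norm interpolant is $\tilde R(\hat f_0)=\mathcal E_0(\sum_i(1-\mathcal L_i)^2\beta_i^2+\sigma^2)$. Indices: $k_m=\max\{k: N(d,1)+\dots+N(d,k)<m\}$, $L_m=N(d,1)+\dots+N(d,k_m)$.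
   Formalization: The kernel trace, the sum over k of $N(d,k)\tilde\lambda_k$, is also at most 1 for every d, and the constant eta may depend on b instead of being absolute. The statement above fails without it. *)

theory Defs
  imports "HOL-Analysis.Analysis"
begin

text \<open>N(d,k): dimension of the space of degree-k spherical harmonics on S^(d-1)
  (k >= 1, d >= 2): N(d,k) = (2k+d-2)/k * binom(k+d-3, k-1).\<close>
definition Nmult :: "nat \<Rightarrow> nat \<Rightarrow> nat" where
  "Nmult d k = ((2 * k + d - 2) * ((k + d - 3) choose (k - 1))) div k"

definition kidx :: "nat \<Rightarrow> nat \<Rightarrow> nat" where
  "kidx d m = (GREATEST k. (\<Sum>j=1..k. Nmult d j) < m)"

definition Lidx :: "nat \<Rightarrow> nat \<Rightarrow> nat" where
  "Lidx d m = (\<Sum>j=1..kidx d m. Nmult d j)"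

text \<open>Distinct eigenvalues lam k (k >= 1), eigenvalue lam k has multiplicity N(d,k).
  Learnability of an eigenvalue at ridge kappa.\<close>
definition Lcoef :: "(nat \<Rightarrow> real) \<Rightarrow> real \<Rightarrow> nat \<Rightarrow> real" where
  "Lcoef lam \<kappa> k = lam k / (lam k + \<kappa>)"

definition sumL :: "nat \<Rightarrow> (nat \<Rightarrow> real) \<Rightarrow> real \<Rightarrow> real" where
  "sumL d lam \<kappa> = (\<Sum>k. real (Nmult d (Suc k)) * Lcoef lam \<kappa> (Suc k))"

definition sumL2 :: "nat \<Rightarrow> (nat \<Rightarrow> real) \<Rightarrow> real \<Rightarrow> real" where
  "sumL2 d lam \<kappa> = (\<Sum>k. real (Nmult d (Suc k)) * (Lcoef lam \<kappa> (Suc k))\<^sup>2)"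

definition E0 :: "nat \<Rightarrow> real \<Rightarrow> (nat \<Rightarrow> real) \<Rightarrow> real \<Rightarrow> real" where
  "E0 d m lam \<kappa> = m / (m - sumL2 d lam \<kappa>)"

text \<open>Target coefficients: beta k j, j < N(d,k), are the coefficients of f* on the
  orthonormal eigenfunctions of the eigenspace of lam k.  Predicted risk of the
  minimum-norm interpolant.\<close>
definition pred_risk ::
  "nat \<Rightarrow> real \<Rightarrow> (nat \<Rightarrow> real) \<Rightarrow> (nat \<Rightarrow> nat \<Rightarrow> real) \<Rightarrow> real \<Rightarrow> real \<Rightarrow> real" where
  "pred_risk d m lam beta \<sigma>2 \<kappa> =
     E0 d m lam \<kappa> *
       ((\<Sum>k. (1 - Lcoef lam \<kappa> (Suc k))\<^sup>2 * (\<Sum>j<Nmult d (Suc k). (beta (Suc k) j)\<^sup>2)) + \<sigma>2)"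

end

theory Submission
  imports Defs
begin

text \<open>Since the trace of the kernel is at most 1, the interpolation constraint
  \<open>\<Sum> L\<^sub>i = m\<close> forces \<open>\<kappa>\<^sub>0 \<le> 1/m\<close>, so the hypothesis on the top
  eigenvalues gives \<open>\<lambda>\<^sub>i > b \<kappa>\<^sub>0\<close>, i.e. \<open>L\<^sub>i > b/(1+b)\<close>, for all \<open>L\<^sub>m\<close>
  eigenfunctions of degree at most \<open>k\<^sub>m\<close>.  For \<open>m = 2\<^sup>d\<close> the multiplicities
  force \<open>L\<^sub>m \<ge> m/11\<close>: the cumulative multiplicity up to degree \<open>j\<close> is below
  \<open>2 binom(d-1+j, j)\<close>, which stays below \<open>2\<^sup>d\<close> while \<open>8j < d\<close>, so
  \<open>k\<^sub>m + 1 \<ge> d/8\<close>; from that degree on, consecutive multiplicities grow by a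
  factor at most 10.  Hence \<open>\<Sum> L\<^sub>i\<^sup>2 \<ge> c m\<close> with \<open>c = (b/(1+b))\<^sup>2/11\<close>,
  so \<open>E\<^sub>0 \<ge> 1/(1-c) > 1 + c\<close>, and the risk is at least
  \<open>E\<^sub>0 \<sigma>\<^sup>2 > (1 + c) \<sigma>\<^sup>2\<close>.\<close>

lemma Nmult_Suc_eq: "Nmult (e + 2) (Suc k) = (Suc k + e choose Suc k) + (k + e choose k)"
proof -
  have "Suc k * (Suc k + e choose Suc k) = Suc (k + e) * (k + e choose k)"
    using binomial_absorption[of k "Suc k + e"] by simp
  then have "(2 * Suc k + e) * (k + e choose k)
      = Suc k * ((Suc k + e choose Suc k) + (k + e choose k))"
    by (simp add: algebra_simps)
  then show ?thesis
    unfolding Nmult_def by (simp add: numeral_eq_Suc del: mult_Suc mult_Suc_right)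
qed

lemma Nmult_one [simp]: "Nmult d (Suc 0) = d"
  by (simp add: Nmult_def)

lemma Nmult_pos:
  assumes "2 \<le> d" "1 \<le> k"
  shows "0 < Nmult d k"
proof -
  obtain e k' where "d = e + 2" "k = Suc k'"
    using assms by (metis le_add_diff_inverse2 Suc_le_D One_nat_def)
  then show ?thesis
    using Nmult_Suc_eq[of e k'] by simp
qed

lemma choose_mul_pow_le: "(n choose k) * a ^ k * b ^ (n - k) \<le> (a + b :: nat) ^ n"
proof (cases "k \<le> n")
  case True
  then show ?thesis
    unfolding binomial of_nat_id by (intro member_le_sum) auto
qed (simp add: binomial_eq_0)

lemma choose_le_two_pow:
  assumes "8 * j \<le> D"
  shows "(D + j choose j) \<le> 2 ^ D"
proof -
  have "(D + j choose j) * 8 ^ D \<le> 9 ^ (D + j)"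
    using choose_mul_pow_le[of "D + j" j 1 8] by simp
  also have "\<dots> \<le> 16 ^ D"
  proof -
    have "(9 ^ (D + j)) ^ 8 = (9 :: nat) ^ (8 * D + 8 * j)"
      by (simp flip: power_mult add: algebra_simps)
    also have "\<dots> \<le> 9 ^ (9 * D)"
      using assms by (intro power_increasing) auto
    also have "\<dots> = (9 ^ 9) ^ D"
      by (simp only: power_mult)
    also have "\<dots> \<le> (16 ^ 8) ^ D"
      by (intro power_mono) auto
    also have "\<dots> = (16 ^ D) ^ 8"
      by (simp only: power_mult[symmetric] mult.commute)
    finally have "(9 ^ (D + j)) ^ 8 \<le> (16 ^ D :: nat) ^ 8" .
    then show ?thesis
      by (subst (asm) power_mono_iff) auto
  qed
  also have "\<dots> = 2 ^ D * 8 ^ D"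
    by (simp flip: power_mult_distrib)
  finally show ?thesis
    by (rule mult_right_le_imp_le) simp
qed

lemma sum_Nmult_less: "(\<Sum>k=1..j. Nmult (e + 2) k) < 2 * (e + 1 + j choose j)"
proof -
  define f where "f k = (e + k choose k)" for k
  have total: "(\<Sum>k\<le>j. f k) = (e + 1 + j choose j)"
    using sum_choose_lower[of e j] by (simp add: f_def)
  have "(\<Sum>k=1..j. Nmult (e + 2) k) = (\<Sum>k<j. Nmult (e + 2) (Suc k))"
    by (simp add: sum.atLeast1_atMost_eq)
  also have "\<dots> = (\<Sum>k<j. f (Suc k)) + (\<Sum>k<j. f k)"
  proof -
    have "Nmult (e + 2) (Suc k) = f (Suc k) + f k" for k
      using Nmult_Suc_eq[of e k] by (simp add: f_def add.commute)
    then show ?thesis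
      by (simp only: sum.distrib)
  qed
  also have "\<dots> < 2 * (\<Sum>k\<le>j. f k)"
  proof -
    have "(\<Sum>k\<le>j. f k) = f 0 + (\<Sum>k<j. f (Suc k))"
      by (rule sum.atMost_shift)
    moreover have "(\<Sum>k\<le>j. f k) = (\<Sum>k<j. f k) + f j"
      by (simp add: lessThan_Suc_atMost[symmetric])
    moreover have "0 < f 0" "0 < f j"
      by (simp_all add: f_def)
    ultimately show ?thesis
      by linarith
  qed
  finally show ?thesis
    by (simp only: total)
qed

lemma Nmult_Suc_le:
  assumes "2 \<le> d" "1 \<le> k" "d \<le> 8 * Suc k"
  shows "Nmult d (Suc k) \<le> 10 * Nmult d k"
proof -
  obtain e i where d: "d = e + 2" and k: "k = Suc i"
    using assms by (metis le_add_diff_inverse2 Suc_le_D One_nat_def)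
  define a2 where "a2 = (Suc (Suc i) + e choose Suc (Suc i))"
  define a1 where "a1 = (Suc i + e choose Suc i)"
  have "Suc (Suc i) * a2 = (Suc (Suc i) + e) * a1"
    unfolding a1_def a2_def using binomial_absorption[of "Suc i" "Suc (Suc i) + e"] by simp
  also have "\<dots> \<le> (9 * Suc (Suc i)) * a1"
    using assms d k by (intro mult_right_mono) auto
  finally have "Suc (Suc i) * a2 \<le> Suc (Suc i) * (9 * a1)"
    by (simp only: mult.left_commute mult.assoc)
  then have "a2 \<le> 9 * a1"
    by (metis mult_le_cancel1 zero_less_Suc)
  moreover have "Nmult d (Suc k) = a2 + a1" "a1 \<le> Nmult d k"
    unfolding a1_def a2_def d k using Nmult_Suc_eq[of e "Suc i"] Nmult_Suc_eq[of e i] by simp_all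
  ultimately show ?thesis
    by linarith
qed

lemma kidx_bounds:
  assumes "2 \<le> d" "d < m"
  shows "1 \<le> kidx d m" and "m \<le> (\<Sum>j=1..Suc (kidx d m). Nmult d j)"
proof -
  define P where "P k \<longleftrightarrow> (\<Sum>j=1..k. Nmult d j) < m" for k
  have bounded: "k \<le> m" if "P k" for k
  proof -
    have "(\<Sum>j=1..k. 1) \<le> (\<Sum>j=1..k. Nmult d j)"
      using Nmult_pos[OF assms(1)] by (intro sum_mono) (simp add: Suc_le_eq)
    then show ?thesis
      using that by (simp add: P_def)
  qed
  have "P 1"
    using assms by (simp add: P_def)
  have K: "kidx d m = Greatest P"
    unfolding kidx_def P_def by simp
  show "1 \<le> kidx d m"
    unfolding K using \<open>P 1\<close> bounded by (rule Greatest_le_nat)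
  show "m \<le> (\<Sum>j=1..Suc (kidx d m). Nmult d j)"
    using Greatest_le_nat[of P "Suc (kidx d m)" m] bounded K by (fastforce simp: P_def)
qed

lemma two_pow_le_Lidx:
  assumes "2 \<le> d"
  shows "2 ^ d \<le> 11 * Lidx d (2 ^ d)"
proof -
  obtain e where d: "d = e + 2"
    using assms by (metis le_add_diff_inverse2)
  define K where "K = kidx d (2 ^ d)"
  have "d < 2 ^ d"
    by (rule less_exp)
  note bounds = kidx_bounds[OF assms this, folded K_def]
  have split: "(\<Sum>j=1..Suc K. Nmult d j) = Lidx d (2 ^ d) + Nmult d (Suc K)"
    by (simp add: Lidx_def K_def)
  have "d \<le> 8 * Suc K"
  proof (rule ccontr)
    assume "\<not> d \<le> 8 * Suc K"
    then have "(e + 1 + Suc K choose Suc K) \<le> 2 ^ (e + 1)"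
      using d by (intro choose_le_two_pow) simp
    then have "(\<Sum>j=1..Suc K. Nmult (e + 2) j) < 2 ^ (e + 2)"
      using sum_Nmult_less[of e "Suc K"] by simp
    then show False
      using bounds(2) d by simp
  qed
  then have "Nmult d (Suc K) \<le> 10 * Nmult d K"
    using Nmult_Suc_le assms bounds(1) by blast
  moreover have "Nmult d K \<le> Lidx d (2 ^ d)"
    unfolding Lidx_def K_def[symmetric] using bounds(1) by (intro member_le_sum) auto
  ultimately show ?thesis
    using bounds(2) split by linarith
qed

lemma Lcoef_pos: "0 < lam k \<Longrightarrow> 0 < \<kappa> \<Longrightarrow> 0 < Lcoef lam \<kappa> k"
  by (simp add: Lcoef_def)

lemma Lcoef_less_1: "0 < lam k \<Longrightarrow> 0 < \<kappa> \<Longrightarrow> Lcoef lam \<kappa> k < 1"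
  by (simp add: Lcoef_def)

lemma Lcoef_le_div: "0 < lam k \<Longrightarrow> 0 < \<kappa> \<Longrightarrow> Lcoef lam \<kappa> k \<le> lam k / \<kappa>"
  unfolding Lcoef_def by (simp add: frac_le)

lemma Lcoef_gt:
  assumes "0 < b" "0 < \<kappa>" "b * \<kappa> < lam k"
  shows "b / (1 + b) < Lcoef lam \<kappa> k"
proof -
  have "0 < lam k"
    using assms mult_pos_pos[of b \<kappa>] by linarith
  then show ?thesis
    using assms unfolding Lcoef_def by (simp add: field_simps)
qed

lemma Lcoef_square_less: "0 < lam k \<Longrightarrow> 0 < \<kappa> \<Longrightarrow> (Lcoef lam \<kappa> k)\<^sup>2 < Lcoef lam \<kappa> k"
  using Lcoef_pos Lcoef_less_1 by (simp add: power2_eq_square)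

context
  fixes d :: nat and lam :: "nat \<Rightarrow> real" and \<kappa> :: real
  assumes pos: "\<And>k. 0 < lam (Suc k)" and ridge: "0 < \<kappa>"
    and trace: "summable (\<lambda>k. real (Nmult d (Suc k)) * lam (Suc k))"
begin

lemma sumL_term_le:
  "real (Nmult d (Suc k)) * Lcoef lam \<kappa> (Suc k) \<le> real (Nmult d (Suc k)) * lam (Suc k) / \<kappa>"
  using mult_left_mono[OF Lcoef_le_div[of lam "Suc k", OF pos ridge], of "real (Nmult d (Suc k))"]
  by simp

lemma summable_sumL: "summable (\<lambda>k. real (Nmult d (Suc k)) * Lcoef lam \<kappa> (Suc k))"
  using Lcoef_pos[of lam, OF pos ridge] sumL_term_le
  by (intro summable_comparison_test'[OF summable_divide[OF trace, of \<kappa>]])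
    (simp add: abs_mult abs_of_pos)

lemma summable_sumL2: "summable (\<lambda>k. real (Nmult d (Suc k)) * (Lcoef lam \<kappa> (Suc k))\<^sup>2)"
  using Lcoef_square_less[of lam, OF pos ridge]
  by (intro summable_comparison_test'[OF summable_sumL]) (simp add: mult_left_mono less_imp_le)

lemma sumL_le_trace_div: "sumL d lam \<kappa> \<le> (\<Sum>k. real (Nmult d (Suc k)) * lam (Suc k)) / \<kappa>"
proof -
  have "sumL d lam \<kappa> \<le> (\<Sum>k. real (Nmult d (Suc k)) * lam (Suc k) / \<kappa>)"
    unfolding sumL_def by (rule suminf_le[OF sumL_term_le summable_sumL summable_divide[OF trace]])
  then show ?thesis
    by (simp add: suminf_divide[OF trace])
qed

lemma sumL2_less_sumL:
  assumes "0 < d"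
  shows "sumL2 d lam \<kappa> < sumL d lam \<kappa>"
proof -
  define N where "N k = real (Nmult d (Suc k))" for k
  define Lc where "Lc k = Lcoef lam \<kappa> (Suc k)" for k
  have square_less: "(Lc k)\<^sup>2 < Lc k" for k
    using Lcoef_square_less[of lam "Suc k", OF pos ridge] by (simp add: Lc_def)
  have "0 < (\<Sum>k. N k * Lc k - N k * (Lc k)\<^sup>2)"
  proof (rule suminf_pos2[where i = 0])
    show "summable (\<lambda>k. N k * Lc k - N k * (Lc k)\<^sup>2)"
      using summable_diff[OF summable_sumL summable_sumL2] by (simp add: N_def Lc_def)
    show "0 \<le> N k * Lc k - N k * (Lc k)\<^sup>2" for k
      using mult_left_mono[OF less_imp_le[OF square_less[of k]], of "N k"] by (simp add: N_def)
    show "0 < N 0 * Lc 0 - N 0 * (Lc 0)\<^sup>2"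
      using assms square_less[of 0] by (simp add: N_def)
  qed
  then show ?thesis
    using suminf_diff[OF summable_sumL summable_sumL2]
    by (simp add: sumL_def sumL2_def N_def Lc_def)
qed

lemma sum_Nmult_le_sumL2:
  assumes "0 \<le> p" and above: "\<And>i. i \<in> {1..K} \<Longrightarrow> p \<le> Lcoef lam \<kappa> i"
  shows "p\<^sup>2 * (\<Sum>i=1..K. real (Nmult d i)) \<le> sumL2 d lam \<kappa>"
proof -
  have "p\<^sup>2 * (\<Sum>i=1..K. real (Nmult d i)) = (\<Sum>k<K. real (Nmult d (Suc k)) * p\<^sup>2)"
    by (simp add: sum.atLeast1_atMost_eq sum_distrib_left mult.commute)
  also have "\<dots> \<le> (\<Sum>k<K. real (Nmult d (Suc k)) * (Lcoef lam \<kappa> (Suc k))\<^sup>2)"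
    using assms by (intro sum_mono mult_left_mono power_mono) auto
  also have "\<dots> \<le> sumL2 d lam \<kappa>"
    unfolding sumL2_def by (rule sum_le_suminf[OF summable_sumL2]) auto
  finally show ?thesis .
qed

end

lemma E0_gt:
  assumes "0 < c" "0 < m" "c * m \<le> sumL2 d lam \<kappa>" "sumL2 d lam \<kappa> < m"
  shows "1 + c < E0 d m lam \<kappa>"
proof -
  have "c * m < 1 * m"
    using assms(3,4) by simp
  then have "c < 1"
    by (rule mult_right_less_imp_less) (use assms(2) in simp)
  then have "1 + c < 1 / (1 - c)"
    using assms(1) by (simp add: field_simps)
  also have "\<dots> = m / (m - c * m)"
    using assms(2) \<open>c < 1\<close> by (simp add: field_simps)
  also have "\<dots> \<le> m / (m - sumL2 d lam \<kappa>)"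
    using assms \<open>c < 1\<close> by (intro divide_left_mono mult_pos_pos) auto
  finally show ?thesis
    by (simp add: E0_def)
qed

lemma pred_risk_ge_noise:
  assumes pos: "\<And>k. 0 < lam (Suc k)" and ridge: "0 < \<kappa>"
    and beta: "summable (\<lambda>k. \<Sum>j<Nmult d (Suc k). (beta (Suc k) j)\<^sup>2)"
    and "0 \<le> E0 d m lam \<kappa>"
  shows "E0 d m lam \<kappa> * \<sigma>2 \<le> pred_risk d m lam beta \<sigma>2 \<kappa>"
proof -
  define B where "B k = (\<Sum>j<Nmult d (Suc k). (beta (Suc k) j)\<^sup>2)" for k
  define bias where "bias k = (1 - Lcoef lam \<kappa> (Suc k))\<^sup>2 * B k" for k
  have "0 \<le> B k" for k
    by (simp add: B_def sum_nonneg)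
  moreover have "(1 - Lcoef lam \<kappa> (Suc k))\<^sup>2 \<le> 1" for k
    using Lcoef_pos[of lam "Suc k", OF pos ridge] Lcoef_less_1[of lam "Suc k", OF pos ridge]
    by (simp add: abs_square_le_1)
  ultimately have "0 \<le> bias k" "bias k \<le> B k" for k
    by (simp_all add: bias_def mult_left_le_one_le)
  moreover from this have "summable bias"
    by (intro summable_comparison_test'[OF beta[folded B_def]]) simp
  ultimately have "\<sigma>2 \<le> (\<Sum>k. bias k) + \<sigma>2"
    by (simp add: suminf_nonneg)
  moreover have "pred_risk d m lam beta \<sigma>2 \<kappa> = E0 d m lam \<kappa> * ((\<Sum>k. bias k) + \<sigma>2)"
    by (simp add: pred_risk_def bias_def B_def)
  ultimately show ?thesis
    using assms(4) by (simp add: mult_left_mono)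
qed

lemma pred_risk_gt_noise:
  fixes lam :: "nat \<Rightarrow> real" and beta :: "nat \<Rightarrow> nat \<Rightarrow> real"
  assumes "0 < b" "2 \<le> d" "0 < \<sigma>2"
    and pos: "\<And>k. 0 < lam (Suc k)"
    and trace: "summable (\<lambda>k. real (Nmult d (Suc k)) * lam (Suc k))"
    and trace_le: "(\<Sum>k. real (Nmult d (Suc k)) * lam (Suc k)) \<le> 1"
    and beta: "summable (\<lambda>k. \<Sum>j<Nmult d (Suc k). (beta (Suc k) j)\<^sup>2)"
    and top: "(MAX i\<in>{1..kidx d (2 ^ d)}. 1 / lam i) < (real (2 ^ d) - real (Lidx d (2 ^ d))) / b"
    and ridge: "0 < \<kappa>" and interpolation: "sumL d lam \<kappa> = real (2 ^ d)"
  shows "(1 + (b / (1 + b))\<^sup>2 / 11) * \<sigma>2 < pred_risk d (real (2 ^ d)) lam beta \<sigma>2 \<kappa>"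
proof -
  define m where "m = real (2 ^ d)"
  define L where "L = real (Lidx d (2 ^ d))"
  define K where "K = kidx d (2 ^ d)"
  define p where "p = b / (1 + b)"
  define c where "c = p\<^sup>2 / 11"
  have "m = sumL d lam \<kappa>"
    by (simp add: m_def interpolation)
  also have "\<dots> \<le> (\<Sum>k. real (Nmult d (Suc k)) * lam (Suc k)) / \<kappa>"
    by (rule sumL_le_trace_div[OF pos ridge trace])
  also have "\<dots> \<le> 1 / \<kappa>"
    using trace_le ridge by (intro divide_right_mono) simp_all
  finally have "m \<le> 1 / \<kappa>" .
  have "p \<le> Lcoef lam \<kappa> i" if "i \<in> {1..K}" for i
  proof -
    have "1 / lam i \<le> (MAX i\<in>{1..K}. 1 / lam i)"
      using that by (intro Max_ge) auto
    also have "\<dots> < (m - L) / b"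
      using top by (simp add: K_def m_def L_def)
    also have "\<dots> \<le> m / b"
      using \<open>0 < b\<close> by (intro divide_right_mono) (simp_all add: L_def)
    also have "\<dots> \<le> 1 / (b * \<kappa>)"
      using divide_right_mono[OF \<open>m \<le> 1 / \<kappa>\<close>, of b] \<open>0 < b\<close> by (simp add: mult.commute)
    finally have "inverse (lam i) < inverse (b * \<kappa>)"
      by (simp add: inverse_eq_divide)
    moreover have "0 < lam i"
      using pos[of "i - 1"] that by simp
    ultimately have "b * \<kappa> < lam i"
      using \<open>0 < b\<close> ridge by (metis inverse_less_iff_less mult_pos_pos)
    then show ?thesis
      unfolding p_def using Lcoef_gt \<open>0 < b\<close> ridge less_imp_le by blast
  qed
  then have "p\<^sup>2 * L \<le> sumL2 d lam \<kappa>"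
    using sum_Nmult_le_sumL2[OF pos ridge trace] \<open>0 < b\<close>
    unfolding L_def Lidx_def K_def p_def of_nat_sum by simp
  moreover have "m \<le> 11 * L"
    using of_nat_mono[OF two_pow_le_Lidx[OF \<open>2 \<le> d\<close>], where 'a = real]
    by (simp add: m_def L_def)
  ultimately have "c * m \<le> sumL2 d lam \<kappa>"
    unfolding c_def using mult_left_mono[OF \<open>m \<le> 11 * L\<close>, of "p\<^sup>2"] by simp
  moreover have "sumL2 d lam \<kappa> < m"
    using sumL2_less_sumL[OF pos ridge trace] \<open>2 \<le> d\<close> interpolation by (simp add: m_def)
  moreover have "0 < c"
    using \<open>0 < b\<close> by (simp add: c_def p_def)
  ultimately have "1 + c < E0 d m lam \<kappa>"
    by (intro E0_gt) (simp_all add: m_def)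
  then have "(1 + c) * \<sigma>2 < E0 d m lam \<kappa> * \<sigma>2"
    using \<open>0 < \<sigma>2\<close> by simp
  also have "\<dots> \<le> pred_risk d m lam beta \<sigma>2 \<kappa>"
    using pred_risk_ge_noise[of lam, OF pos ridge beta] \<open>1 + c < E0 d m lam \<kappa>\<close> \<open>0 < c\<close>
    by simp
  finally show ?thesis
    by (simp add: c_def p_def m_def)
qed

theorem corollary2:
  fixes b :: real
  assumes "b > 0"
  shows "\<exists>\<eta>>0. \<forall>(lam :: nat \<Rightarrow> nat \<Rightarrow> real) (beta :: nat \<Rightarrow> nat \<Rightarrow> nat \<Rightarrow> real) (\<sigma>2 :: real).
     ( \<sigma>2 > 0
     \<and> (\<forall>d\<ge>2. \<forall>k\<ge>1. lam d k > 0 \<and> lam d (Suc k) < lam d k)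
     \<and> (\<forall>d\<ge>2. summable (\<lambda>k. real (Nmult d (Suc k)) * lam d (Suc k))
               \<and> (\<Sum>k. real (Nmult d (Suc k)) * lam d (Suc k)) \<le> 1)
     \<and> (\<forall>d\<ge>2. summable (\<lambda>k. \<Sum>j<Nmult d (Suc k). (beta d (Suc k) j)\<^sup>2))
     \<and> (\<forall>d\<ge>2. (MAX i\<in>{1..kidx d (2^d)}. 1 / lam d i)
                 < (real (2^d) - real (Lidx d (2^d))) / b) )
     \<longrightarrow> (\<forall>d\<ge>2. \<forall>\<kappa>>0. sumL d (lam d) \<kappa> = real (2^d) \<longrightarrow>
            pred_risk d (real (2^d)) (lam d) (beta d) \<sigma>2 \<kappa> > (1 + \<eta>) * \<sigma>2)"
proof (intro exI[of _ "(b / (1 + b))\<^sup>2 / 11"] conjI allI impI)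
  show "0 < (b / (1 + b))\<^sup>2 / 11"
    using assms by simp
qed (intro pred_risk_gt_noise[OF assms], auto)

end
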